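(* In the setting below, for every face $F$ of $\mathcal{P}_\lambda$, every edge of $\phi(F)$ lies on some positive path of $\Gamma_{\mathbf{k}}$ that is entirely contained in $\phi(F)$.
   Context: Let $\mathbf{k}=(k_1,\dots,k_s)$ be positive integers with sum $n$, $n_0=0$, $n_i=\sum_{j\le i}k_j$, and $\lambda=(\lambda_1,\dots,\lambda_n)$ real with $\lambda_1=\cdots=\lambda_{n_1}>\lambda_{n_1+1}=\cdots=\lambda_{n_2}>\cdots>\lambda_{n_{s-1}+1}=\cdots=\lambda_n$. Let $I=\{(i,j)\in\mathbb{Z}^2:i,j\ge1,i+j\le n\}$; $\mathcal{P}_\lambda=\{x=(x_{i,j})_{(i,j)\in I}: x_{i,j+1}\ge x_{i,j}\ge x_{i+1,j}\ \forall (i,j)\in I\}$ with $x_{i,n+1-i}:=\lambda_i$. $Q^+$ is the directed graph on $\mathbb{Z}_{\ge0}^2$ with edges $((i,j),(i,j+1))$, $((i,j),(i+1,j))$. Terminal vertices $T_{\mathbf{k}}=\{(n_\ell,n-n_\ell):0\le\ell\le s\}$; $\Gamma_{\mathbf{k}}$ is the induced subgraph of $Q^+$ on $\{(a,b):a\le c,b\le d\text{ for some }(c,d)\in T_{\mathbf{k}}\}$. A positive path is a shortest directed path in $\Gamma_{\mathbf{k}}$ from $(0,0)$ to a terminal vertex. For a face $F$ of $\mathcal{P}_\lambda$, $\phi(F)$ is the subgraph of $Q^+$ whose edges are: all $((0,i),(0,i+1))$ and $((i,0),(i+1,0))$, $0\le i\le n-1$; $((i-1,j),(i,j))$ for $(i,j)\in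 I$ whenever some $x\in F$ has $x_{i,j}<x_{i,j+1}$; $((i,j-1),(i,j))$ for $(i,j)\in I$ whenever some $x\in F$ has $x_{i,j}>x_{i+1,j}$; its vertices are the endpoints of these edges. *)

theory Defs
  imports Complex_Main
begin

definition psum :: "nat list \<Rightarrow> nat \<Rightarrow> nat" where
  "psum k l = sum_list (take l k)"

definition Iset :: "nat \<Rightarrow> (nat \<times> nat) set" where
  "Iset n = {(i, j). 1 \<le> i \<and> 1 \<le> j \<and> i + j \<le> n}"

definition xext :: "nat \<Rightarrow> (nat \<Rightarrow> real) \<Rightarrow> (nat \<times> nat \<Rightarrow> real) \<Rightarrow> nat \<times> nat \<Rightarrow> real" where
  "xext n lam x p = (if fst p + snd p = n + 1 then lam (fst p) else x p)"

(* The polytope P_lambda inside R^I; points are functions vanishing outside I *)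
definition Ppoly :: "nat \<Rightarrow> (nat \<Rightarrow> real) \<Rightarrow> (nat \<times> nat \<Rightarrow> real) set" where
  "Ppoly n lam = {x. (\<forall>p. p \<notin> Iset n \<longrightarrow> x p = 0) \<and>
     (\<forall>i j. (i, j) \<in> Iset n \<longrightarrow>
        xext n lam x (i, j + 1) \<ge> xext n lam x (i, j) \<and>
        xext n lam x (i, j) \<ge> xext n lam x (i + 1, j))}"

(* Faces of a convex set (library notion face_of, written out for the
   function space, which is not a real_vector instance in the library) *)
definition fclosed_segment :: "('a \<Rightarrow> real) \<Rightarrow> ('a \<Rightarrow> real) \<Rightarrow> ('a \<Rightarrow> real) set" where
  "fclosed_segment a b = {(\<lambda>p. (1 - u) * a p + u * b p) | u. 0 \<le> u \<and> u \<le> 1}"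

definition fopen_segment :: "('a \<Rightarrow> real) \<Rightarrow> ('a \<Rightarrow> real) \<Rightarrow> ('a \<Rightarrow> real) set" where
  "fopen_segment a b = fclosed_segment a b - {a, b}"

definition fconvex :: "('a \<Rightarrow> real) set \<Rightarrow> bool" where
  "fconvex S \<longleftrightarrow> (\<forall>x\<in>S. \<forall>y\<in>S. \<forall>u\<ge>0. \<forall>v\<ge>0. u + v = 1 \<longrightarrow> (\<lambda>p. u * x p + v * y p) \<in> S)"

definition fface_of :: "('a \<Rightarrow> real) set \<Rightarrow> ('a \<Rightarrow> real) set \<Rightarrow> bool" where
  "fface_of T S \<longleftrightarrow> T \<subseteq> S \<and> fconvex T \<and>
     (\<forall>a\<in>S. \<forall>b\<in>S. \<forall>x\<in>T. x \<in> fopen_segment a b \<longrightarrow> a \<in> T \<and> b \<in> T)"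

definition Qplus_edges :: "((nat \<times> nat) \<times> (nat \<times> nat)) set" where
  "Qplus_edges = {(v, w). w = (fst v, snd v + 1) \<or> w = (fst v + 1, snd v)}"

definition terminals :: "nat list \<Rightarrow> (nat \<times> nat) set" where
  "terminals k = {(psum k l, sum_list k - psum k l) | l. l \<le> length k}"

definition Gamma_verts :: "nat list \<Rightarrow> (nat \<times> nat) set" where
  "Gamma_verts k = {(a, b). \<exists>(c, d)\<in>terminals k. a \<le> c \<and> b \<le> d}"

definition Gamma_edges :: "nat list \<Rightarrow> ((nat \<times> nat) \<times> (nat \<times> nat)) set" where
  "Gamma_edges k = {(v, w) \<in> Qplus_edges. v \<in> Gamma_verts k \<and> w \<in> Gamma_verts k}"

definition is_dpath :: "('v \<times> 'v) set \<Rightarrow> 'v list \<Rightarrow> 'v \<Rightarrow> 'v \<Rightarrow> bool" where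
  "is_dpath E ps u v \<longleftrightarrow> ps \<noteq> [] \<and> hd ps = u \<and> last ps = v \<and>
     (\<forall>i. i + 1 < length ps \<longrightarrow> (ps ! i, ps ! (i + 1)) \<in> E)"

definition path_edges :: "'v list \<Rightarrow> ('v \<times> 'v) set" where
  "path_edges ps = set (zip ps (tl ps))"

definition positive_path :: "nat list \<Rightarrow> (nat \<times> nat) list \<Rightarrow> bool" where
  "positive_path k ps \<longleftrightarrow> (\<exists>t\<in>terminals k. is_dpath (Gamma_edges k) ps (0, 0) t \<and>
     (\<forall>qs. is_dpath (Gamma_edges k) qs (0, 0) t \<longrightarrow> length ps \<le> length qs))"

definition phi_edges :: "nat \<Rightarrow> (nat \<Rightarrow> real) \<Rightarrow> (nat \<times> nat \<Rightarrow> real) set \<Rightarrow>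
    ((nat \<times> nat) \<times> (nat \<times> nat)) set" where
  "phi_edges n lam F =
     {((0, i), (0, i + 1)) | i. i < n} \<union> {((i, 0), (i + 1, 0)) | i. i < n} \<union>
     {((i - 1, j), (i, j)) | i j. (i, j) \<in> Iset n \<and>
         (\<exists>x\<in>F. xext n lam x (i, j) < xext n lam x (i, j + 1))} \<union>
     {((i, j - 1), (i, j)) | i j. (i, j) \<in> Iset n \<and>
         (\<exists>x\<in>F. xext n lam x (i, j) > xext n lam x (i + 1, j))}"

end

theory Submission
  imports Defs
begin

(* Every coordinate x_{i,j} of a point of P_lambda lies between lambda_{n+1-j} and lambda_i.
   A strict inequality at (i,j) therefore forces lambda_{n+1-j} < lambda_i, so some block
   boundary n_l lies in [i, n+1-j) and (i,j) sits below the terminal (n_l, n-n_l): phi(F) is a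
   subgraph of Gamma_k.  Around a unit square the two monotone chains of coordinates between
   opposite corners have the same endpoints, so a vertex of phi(F) strictly between (0,0) and
   the antidiagonal a+b = n has an incoming edge iff it has an outgoing one.  Every edge thus
   extends backwards to (0,0) and forwards to the antidiagonal, where the vertices of Gamma_k
   are terminals; as all paths in Q^+ between two vertices have the same length, the resulting
   path is positive. *)

lemma path_edges_simps [simp]:
  "path_edges [] = {}"
  "path_edges [a] = {}"
  "path_edges (a # b # xs) = insert (a, b) (path_edges (b # xs))"
  by (auto simp: path_edges_def)

lemma path_edges_append:
  "ps \<noteq> [] \<Longrightarrow> qs \<noteq> [] \<Longrightarrow>
   path_edges (ps @ qs) = path_edges ps \<union> {(last ps, hd qs)} \<union> path_edges qs"
  by (induction ps rule: induct_list012) (auto simp: neq_Nil_conv)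

lemma is_dpath_iff_path_edges:
  "is_dpath E ps u v \<longleftrightarrow> ps \<noteq> [] \<and> hd ps = u \<and> last ps = v \<and> path_edges ps \<subseteq> E"
proof -
  have "path_edges ps = {(ps ! i, ps ! (i + 1)) | i. i + 1 < length ps}"
    unfolding path_edges_def set_zip by (auto simp: nth_tl)
  then show ?thesis
    unfolding is_dpath_def by auto
qed

lemma is_dpath_join:
  assumes "is_dpath E ps u v" "(v, w) \<in> E" "is_dpath E qs w t"
  shows "is_dpath E (ps @ qs) u t" "(v, w) \<in> path_edges (ps @ qs)"
  using assms by (auto simp: is_dpath_iff_path_edges path_edges_append)

lemma dpath_from_source:
  fixes r :: "'v \<Rightarrow> nat"
  assumes rank: "\<And>u v. (u, v) \<in> E \<Longrightarrow> r v = Suc (r u)"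
    and pred: "\<And>v w. (v, w) \<in> E \<Longrightarrow> v \<noteq> s \<Longrightarrow> \<exists>u. (u, v) \<in> E"
    and "(v, w) \<in> E"
  shows "\<exists>ps. is_dpath E ps s v"
  using \<open>(v, w) \<in> E\<close>
proof (induction "r v" arbitrary: v w rule: less_induct)
  case less
  show ?case
  proof (cases "v = s")
    case True
    then show ?thesis
      by (intro exI[of _ "[v]"]) (simp add: is_dpath_iff_path_edges)
  next
    case False
    then obtain u where u: "(u, v) \<in> E"
      using pred less.prems by blast
    then obtain ps where "is_dpath E ps s u"
      using less.hyps rank by force
    with u have "is_dpath E (ps @ [v]) s v"
      using is_dpath_join(1)[of E ps s u v "[v]" v] by (simp add: is_dpath_iff_path_edges)
    then show ?thesis ..
  qed
qed

lemma dpath_to_level: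
  fixes r :: "'v \<Rightarrow> nat"
  assumes rank: "\<And>u v. (u, v) \<in> E \<Longrightarrow> r v = Suc (r u)"
    and bound: "\<And>u v. (u, v) \<in> E \<Longrightarrow> r v \<le> N"
    and succ: "\<And>u v. (u, v) \<in> E \<Longrightarrow> r v < N \<Longrightarrow> \<exists>w. (v, w) \<in> E"
    and "(v, w) \<in> E"
  shows "\<exists>qs t. is_dpath E qs w t \<and> r t = N \<and> (\<exists>u. (u, t) \<in> E)"
  using \<open>(v, w) \<in> E\<close>
proof (induction "N - r w" arbitrary: v w rule: less_induct)
  case less
  show ?case
  proof (cases "r w < N")
    case False
    then have "r w = N"
      using bound[OF less.prems] by simp
    moreover have "is_dpath E [w] w w"
      by (simp add: is_dpath_iff_path_edges)
    ultimately show ?thesis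
      using less.prems by blast
  next
    case True
    then obtain w' where w': "(w, w') \<in> E"
      using succ less.prems by blast
    have "N - r w' < N - r w"
      using rank[OF w'] True by simp
    then obtain qs t where "is_dpath E qs w' t" "r t = N" "\<exists>u. (u, t) \<in> E"
      using less.hyps w' by blast
    moreover have "is_dpath E [w] w w"
      by (simp add: is_dpath_iff_path_edges)
    ultimately show ?thesis
      using is_dpath_join(1)[of E "[w]" w w w' qs t] w' by auto
  qed
qed

lemma Qplus_path_length:
  "path_edges ps \<subseteq> Qplus_edges \<Longrightarrow> ps \<noteq> [] \<Longrightarrow>
   fst (last ps) + snd (last ps) + 1 = fst (hd ps) + snd (hd ps) + length ps"
  by (induction ps rule: induct_list012) (auto simp: Qplus_edges_def)

lemma positive_path_if_dpath:
  assumes "t \<in> terminals k" "is_dpath (Gamma_edges k) ps (0, 0) t"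
  shows "positive_path k ps"
proof -
  have "Gamma_edges k \<subseteq> Qplus_edges"
    by (auto simp: Gamma_edges_def)
  then have length_eq: "length qs = fst t + snd t + 1"
    if "is_dpath (Gamma_edges k) qs (0, 0) t" for qs
    using that Qplus_path_length[of qs] by (auto simp: is_dpath_iff_path_edges)
  show ?thesis
    unfolding positive_path_def using assms length_eq by auto
qed

lemma psum_le_sum_list: "psum k l \<le> sum_list k"
  unfolding psum_def by (metis append_take_drop_id le_add1 sum_list_append)

lemma psum_in_terminals: "l \<le> length k \<Longrightarrow> (psum k l, sum_list k - psum k l) \<in> terminals k"
  unfolding terminals_def by blast

lemma Gamma_verts_downward:
  "(c, d) \<in> Gamma_verts k \<Longrightarrow> a \<le> c \<Longrightarrow> b \<le> d \<Longrightarrow> (a, b) \<in> Gamma_verts k"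
  unfolding Gamma_verts_def by (auto intro: le_trans)

lemma Gamma_verts_axes:
  assumes "a \<le> sum_list k"
  shows "(a, 0) \<in> Gamma_verts k" "(0, a) \<in> Gamma_verts k"
proof -
  have "(0, sum_list k) \<in> terminals k" "(sum_list k, 0) \<in> terminals k"
    using psum_in_terminals[of 0 k] psum_in_terminals[of "length k" k] by (simp_all add: psum_def)
  then show "(a, 0) \<in> Gamma_verts k" "(0, a) \<in> Gamma_verts k"
    using assms unfolding Gamma_verts_def by fastforce+
qed

lemma terminals_if_Gamma_verts:
  assumes "(a, b) \<in> Gamma_verts k" "sum_list k \<le> a + b"
  shows "(a, b) \<in> terminals k"
proof -
  obtain l where "l \<le> length k" "a \<le> psum k l" "b \<le> sum_list k - psum k l"
    using assms(1) unfolding Gamma_verts_def terminals_def by blast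
  with assms(2) psum_le_sum_list[of k l] have "a = psum k l" "b = sum_list k - psum k l"
    by linarith+
  with \<open>l \<le> length k\<close> show ?thesis
    using psum_in_terminals by simp
qed

lemma lam_eq_within_block:
  assumes lam_eq: "\<forall>l<length k. \<forall>a b. psum k l < a \<and> a \<le> b \<and> b \<le> psum k (l + 1)
                   \<longrightarrow> lam a = lam b"
    and "1 \<le> a" "a \<le> b" "b \<le> sum_list k"
    and no_cut: "\<forall>l\<le>length k. \<not> (a \<le> psum k l \<and> psum k l < b)"
  shows "lam a = lam b"
proof -
  define m where "m = (LEAST l. a \<le> psum k l)"
  have ex: "a \<le> psum k (length k)"
    using assms by (simp add: psum_def)
  have "a \<le> psum k m" "m \<le> length k"
    unfolding m_def using LeastI[of "\<lambda>l. a \<le> psum k l", OF ex] Least_le[of "\<lambda>l. a \<le> psum k l", OF ex]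
    by auto
  moreover have "m \<noteq> 0"
    using \<open>a \<le> psum k m\<close> \<open>1 \<le> a\<close> by (cases m) (auto simp: psum_def)
  then obtain l where l: "m = Suc l"
    using not0_implies_Suc by blast
  then have "\<not> a \<le> psum k l"
    using not_less_Least[of l "\<lambda>l. a \<le> psum k l"] by (simp add: m_def)
  ultimately have "psum k l < a" "b \<le> psum k (l + 1)" "l < length k"
    using no_cut l by auto
  then show ?thesis
    using lam_eq \<open>a \<le> b\<close> by blast
qed

lemma Gamma_verts_if_lam_less:
  fixes lam :: "nat \<Rightarrow> 'a::order"
  assumes n_def: "n = sum_list k"
    and lam_eq: "\<forall>l<length k. \<forall>a b. psum k l < a \<and> a \<le> b \<and> b \<le> psum k (l + 1)
                   \<longrightarrow> lam a = lam b"
    and "(i, j) \<in> Iset n" "lam (n + 1 - j) < lam i"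
  shows "(i, j) \<in> Gamma_verts k"
proof -
  have "lam i \<noteq> lam (n + 1 - j)"
    using assms(4) by (metis less_irrefl)
  moreover have "1 \<le> i" "i \<le> n + 1 - j" "n + 1 - j \<le> sum_list k"
    using assms(3) n_def by (auto simp: Iset_def)
  ultimately obtain l where l: "l \<le> length k" "i \<le> psum k l" "psum k l < n + 1 - j"
    using lam_eq_within_block[OF lam_eq, of i "n + 1 - j"] by blast
  then have "(psum k l, n - psum k l) \<in> terminals k" "j \<le> n - psum k l"
    using psum_in_terminals n_def by auto
  with l show ?thesis
    unfolding Gamma_verts_def by blast
qed

lemma Ppoly_xext_mono:
  "x \<in> Ppoly n lam \<Longrightarrow> (i, j) \<in> Iset n \<Longrightarrow>
   xext n lam x (i, j) \<le> xext n lam x (i, j + 1) \<and> xext n lam x (i + 1, j) \<le> xext n lam x (i, j)"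
  by (auto simp: Ppoly_def)

lemma Ppoly_xext_le_lam:
  assumes "x \<in> Ppoly n lam" "1 \<le> i" "1 \<le> j" "i + j \<le> n + 1"
  shows "xext n lam x (i, j) \<le> lam i"
  using assms(3,4)
proof (induction "n + 1 - (i + j)" arbitrary: j)
  case 0
  then show ?case by (simp add: xext_def)
next
  case (Suc m)
  then have "xext n lam x (i, j) \<le> xext n lam x (i, j + 1)"
    using Ppoly_xext_mono[OF assms(1)] assms(2) by (simp add: Iset_def)
  moreover have "xext n lam x (i, j + 1) \<le> lam i"
    using Suc by simp
  ultimately show ?case by linarith
qed

lemma Ppoly_lam_le_xext:
  assumes "x \<in> Ppoly n lam" "1 \<le> i" "1 \<le> j" "i + j \<le> n + 1"
  shows "lam (n + 1 - j) \<le> xext n lam x (i, j)"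
  using assms(2,4)
proof (induction "n + 1 - (i + j)" arbitrary: i)
  case 0
  then have "i + j = n + 1" "n + 1 - j = i" by simp_all
  then show ?case by (simp add: xext_def)
next
  case (Suc m)
  then have "xext n lam x (i + 1, j) \<le> xext n lam x (i, j)"
    using Ppoly_xext_mono[OF assms(1)] assms(3) by (simp add: Iset_def)
  moreover have "lam (n + 1 - j) \<le> xext n lam x (i + 1, j)"
    using Suc by simp
  ultimately show ?case by linarith
qed

lemma Ppoly_square_strict_iff:
  assumes "x \<in> Ppoly n lam" "1 \<le> a" "1 \<le> b" "a + b < n"
  shows "xext n lam x (a, b) < xext n lam x (a, b + 1) \<or> xext n lam x (a + 1, b) < xext n lam x (a, b)
     \<longleftrightarrow> xext n lam x (a + 1, b) < xext n lam x (a + 1, b + 1) \<or>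
         xext n lam x (a + 1, b + 1) < xext n lam x (a, b + 1)"
proof -
  have "(a, b) \<in> Iset n" "(a + 1, b) \<in> Iset n" "(a, b + 1) \<in> Iset n"
    using assms by (auto simp: Iset_def)
  then show ?thesis
    using Ppoly_xext_mono[OF assms(1)] by fastforce
qed

lemma Ppoly_strict_in_Gamma_verts:
  assumes n_def: "n = sum_list k"
    and lam_eq: "\<forall>l<length k. \<forall>a b. psum k l < a \<and> a \<le> b \<and> b \<le> psum k (l + 1)
                   \<longrightarrow> lam a = lam b"
    and x: "x \<in> Ppoly n lam" and ij: "(i, j) \<in> Iset n"
    and strict: "xext n lam x (i, j) < xext n lam x (i, j + 1) \<or>
                 xext n lam x (i + 1, j) < xext n lam x (i, j)"
  shows "(i, j) \<in> Gamma_verts k"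
proof -
  have "lam (n + 1 - j) \<le> xext n lam x (i + 1, j)" "xext n lam x (i, j + 1) \<le> lam i"
    using ij Ppoly_lam_le_xext[OF x, of "i + 1" j] Ppoly_xext_le_lam[OF x, of i "j + 1"]
    by (auto simp: Iset_def)
  then have "lam (n + 1 - j) < lam i"
    using strict Ppoly_xext_mono[OF x ij] by linarith
  then show ?thesis
    using Gamma_verts_if_lam_less[OF n_def lam_eq ij] by blast
qed

lemma phi_edges_iff:
  "((a, b), (c, d)) \<in> phi_edges n lam F \<longleftrightarrow>
     (a = 0 \<and> c = 0 \<and> d = b + 1 \<and> b < n) \<or>
     (b = 0 \<and> d = 0 \<and> c = a + 1 \<and> a < n) \<or>
     (c = a + 1 \<and> d = b \<and> (a + 1, b) \<in> Iset n \<and>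
        (\<exists>x\<in>F. xext n lam x (a + 1, b) < xext n lam x (a + 1, b + 1))) \<or>
     (c = a \<and> d = b + 1 \<and> (a, b + 1) \<in> Iset n \<and>
        (\<exists>x\<in>F. xext n lam x (a + 1, b + 1) < xext n lam x (a, b + 1)))"
    (is "?lhs \<longleftrightarrow> ?rhs")
proof
  assume ?lhs
  then show ?rhs
    unfolding phi_edges_def
  proof (elim UnE CollectE exE conjE)
    fix i j
    assume "((a, b), c, d) = ((i - 1, j), i, j)" "(i, j) \<in> Iset n"
      "\<exists>x\<in>F. xext n lam x (i, j) < xext n lam x (i, j + 1)"
    moreover from this(2) have "i = (i - 1) + 1" by (simp add: Iset_def)
    ultimately show ?rhs by auto
  next
    fix i j
    assume "((a, b), c, d) = ((i, j - 1), i, j)" "(i, j) \<in> Iset n"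
      "\<exists>x\<in>F. xext n lam x (i + 1, j) < xext n lam x (i, j)"
    moreover from this(2) have "j = (j - 1) + 1" by (simp add: Iset_def)
    ultimately show ?rhs by auto
  qed auto
next
  assume ?rhs
  then show ?lhs
    unfolding phi_edges_def by (elim disjE conjE) force+
qed

lemma phi_edge_rank:
  assumes "(u, v) \<in> phi_edges n lam F"
  shows "fst v + snd v = Suc (fst u + snd u)" "fst v + snd v \<le> n"
  using assms by (cases u; cases v; auto simp: phi_edges_iff Iset_def)+

lemma phi_edges_subset_Gamma_edges:
  assumes n_def: "n = sum_list k"
    and lam_eq: "\<forall>l<length k. \<forall>a b. psum k l < a \<and> a \<le> b \<and> b \<le> psum k (l + 1)
                   \<longrightarrow> lam a = lam b"
    and F: "F \<subseteq> Ppoly n lam"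
  shows "phi_edges n lam F \<subseteq> Gamma_edges k"
proof clarify
  fix a b c d
  assume e: "((a, b), (c, d)) \<in> phi_edges n lam F"
  have strict: "(i, j) \<in> Gamma_verts k"
    if "x \<in> F" "(i, j) \<in> Iset n"
      "xext n lam x (i, j) < xext n lam x (i, j + 1) \<or> xext n lam x (i + 1, j) < xext n lam x (i, j)"
    for x i j
    using Ppoly_strict_in_Gamma_verts[OF n_def lam_eq] F that by blast
  have "(c, d) \<in> Gamma_verts k"
    using e Gamma_verts_axes[of _ k] n_def strict[of _ "a + 1" b] strict[of _ a "b + 1"]
    unfolding phi_edges_iff by auto
  moreover have "a \<le> c" "b \<le> d" "((a, b), (c, d)) \<in> Qplus_edges"
    using e by (auto simp: phi_edges_iff Qplus_edges_def)
  ultimately show "((a, b), (c, d)) \<in> Gamma_edges k"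
    unfolding Gamma_edges_def using Gamma_verts_downward by blast
qed

lemma phi_edges_in_iff_out:
  assumes F: "F \<subseteq> Ppoly n lam" and "0 < a + b" "a + b < n"
  shows "(\<exists>u. (u, (a, b)) \<in> phi_edges n lam F) \<longleftrightarrow> (\<exists>w. ((a, b), w) \<in> phi_edges n lam F)"
proof (cases "a = 0 \<or> b = 0")
  case True
  then have "((a, b - 1), (a, b)) \<in> phi_edges n lam F \<and> ((a, b), (a, b + 1)) \<in> phi_edges n lam F \<or>
             ((a - 1, b), (a, b)) \<in> phi_edges n lam F \<and> ((a, b), (a + 1, b)) \<in> phi_edges n lam F"
    using assms(2,3) by (auto simp: phi_edges_iff)
  then show ?thesis by blast
next
  case False
  then have "1 \<le> a" "1 \<le> b" by simp_all
  have "(\<exists>u. (u, (a, b)) \<in> phi_edges n lam F) \<longleftrightarrow>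
        (\<exists>x\<in>F. xext n lam x (a, b) < xext n lam x (a, b + 1) \<or>
                xext n lam x (a + 1, b) < xext n lam x (a, b))"
  proof
    assume "\<exists>u. (u, (a, b)) \<in> phi_edges n lam F"
    then obtain a' b' where "((a', b'), (a, b)) \<in> phi_edges n lam F"
      by auto
    then show "\<exists>x\<in>F. xext n lam x (a, b) < xext n lam x (a, b + 1) \<or>
                xext n lam x (a + 1, b) < xext n lam x (a, b)"
      using False by (auto simp: phi_edges_iff)
  next
    assume "\<exists>x\<in>F. xext n lam x (a, b) < xext n lam x (a, b + 1) \<or>
                xext n lam x (a + 1, b) < xext n lam x (a, b)"
    then have "((a - 1, b), (a, b)) \<in> phi_edges n lam F \<or> ((a, b - 1), (a, b)) \<in> phi_edges n lam F"
      using False assms(3) by (auto simp: phi_edges_iff Iset_def)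
    then show "\<exists>u. (u, (a, b)) \<in> phi_edges n lam F"
      by blast
  qed
  moreover have "(\<exists>w. ((a, b), w) \<in> phi_edges n lam F) \<longleftrightarrow>
        (\<exists>x\<in>F. xext n lam x (a + 1, b) < xext n lam x (a + 1, b + 1) \<or>
                xext n lam x (a + 1, b + 1) < xext n lam x (a, b + 1))"
    using False assms(3) by (auto simp: phi_edges_iff Iset_def)
  ultimately show ?thesis
    using Ppoly_square_strict_iff[of _ n lam a b] F \<open>1 \<le> a\<close> \<open>1 \<le> b\<close> assms(3) by blast
qed

lemma phi_edges_pred:
  assumes "F \<subseteq> Ppoly n lam" "(v, w) \<in> phi_edges n lam F" "v \<noteq> (0, 0)"
  shows "\<exists>u. (u, v) \<in> phi_edges n lam F"
  using phi_edges_in_iff_out[OF assms(1), of "fst v" "snd v"] phi_edge_rank[OF assms(2)] assms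
  by (cases v; cases w) auto

lemma phi_edges_succ:
  assumes "F \<subseteq> Ppoly n lam" "(u, v) \<in> phi_edges n lam F" "fst v + snd v < n"
  shows "\<exists>w. (v, w) \<in> phi_edges n lam F"
  using phi_edges_in_iff_out[OF assms(1), of "fst v" "snd v"] phi_edge_rank(1)[OF assms(2)] assms
  by (cases u; cases v) auto

theorem lemma2p3:
  fixes k :: "nat list" and n :: nat and lam :: "nat \<Rightarrow> real"
    and F :: "(nat \<times> nat \<Rightarrow> real) set"
  assumes kpos: "\<forall>a\<in>set k. 0 < a"
    and n_def: "n = sum_list k"
    and lam_eq: "\<forall>l<length k. \<forall>a b. psum k l < a \<and> a \<le> b \<and> b \<le> psum k (l + 1)
                   \<longrightarrow> lam a = lam b"
    and lam_gt: "\<forall>l. 1 \<le> l \<and> l < length k \<longrightarrow> lam (psum k l) > lam (psum k l + 1)"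
    and face: "fface_of F (Ppoly n lam)"
  shows "\<forall>e\<in>phi_edges n lam F. \<exists>ps. positive_path k ps \<and> e \<in> path_edges ps \<and>
           path_edges ps \<subseteq> phi_edges n lam F"
proof (intro ballI)
  let ?E = "phi_edges n lam F"
  let ?r = "\<lambda>v :: nat \<times> nat. fst v + snd v"
  fix e assume "e \<in> ?E"
  then obtain v w where e: "e = (v, w)" "(v, w) \<in> ?E"
    by (metis prod.exhaust)
  have F: "F \<subseteq> Ppoly n lam"
    using face by (simp add: fface_of_def)
  note rank = phi_edge_rank(1)[of _ _ n lam F] and bound = phi_edge_rank(2)[of _ _ n lam F]
    and pred = phi_edges_pred[OF F] and succ = phi_edges_succ[OF F]
  obtain ps where ps: "is_dpath ?E ps (0, 0) v"
    using dpath_from_source[where r = ?r and s = "(0, 0)" and E = ?E] rank pred e(2) by blast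
  obtain qs t where qs: "is_dpath ?E qs w t" "?r t = n" "\<exists>u. (u, t) \<in> ?E"
    using dpath_to_level[where r = ?r and N = n and E = ?E] rank bound succ e(2) by blast
  have Gamma: "?E \<subseteq> Gamma_edges k"
    using phi_edges_subset_Gamma_edges[OF n_def lam_eq F] .
  then have "t \<in> terminals k"
    using qs(2,3) terminals_if_Gamma_verts[of "fst t" "snd t" k] n_def
    by (auto simp: Gamma_edges_def)
  moreover have "is_dpath ?E (ps @ qs) (0, 0) t" "e \<in> path_edges (ps @ qs)"
    using is_dpath_join[OF ps e(2) qs(1)] e(1) by simp_all
  ultimately show "\<exists>ps. positive_path k ps \<and> e \<in> path_edges ps \<and> path_edges ps \<subseteq> ?E"
    using Gamma positive_path_if_dpath[of t k "ps @ qs"]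
    by (auto simp: is_dpath_iff_path_edges)
qed

end
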